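(* Let $K$ be a valued field, $d\ge 1$, and $Y\subseteq K^d$ finite and nonempty. Then there is $Y_0\subseteq Y$ with $|Y_0|\le d+1$ and $\operatorname{conv}(Y_0)=\operatorname{conv}(Y)$.
   Context: $K$ is a field with a valuation $\nu:K\to\Gamma\cup\{\infty\}$ and valuation ring $\mathcal{O}=\{x:\nu(x)\ge 0\}$. For $Y\subseteq K^d$, $\operatorname{conv}(Y)=\{\sum_{i=1}^n\alpha_iy_i: n\ge1, y_i\in Y,\alpha_i\in\mathcal{O},\sum_i\alpha_i=1\}$. *)

theory Defs
  imports "HOL-Analysis.Finite_Cartesian_Product"
begin

text \<open>We encode the value set \<open>\<Gamma> \<union> {\<infinity>}\<close> as \<open>'g option\<close>, with \<open>None\<close> playing the role of \<open>\<infinity>\<close>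
  (the value of 0 only).\<close>

fun le_inf :: "'g::linorder option \<Rightarrow> 'g option \<Rightarrow> bool" where
  "le_inf _ None = True"
| "le_inf None (Some _) = False"
| "le_inf (Some a) (Some b) = (a \<le> b)"

fun plus_inf :: "'g::plus option \<Rightarrow> 'g option \<Rightarrow> 'g option" where
  "plus_inf (Some a) (Some b) = Some (a + b)"
| "plus_inf _ _ = None"

definition is_valuation :: "('k::field \<Rightarrow> 'g::linordered_ab_group_add option) \<Rightarrow> bool" where
  "is_valuation \<nu> \<longleftrightarrow>
     (\<forall>x. \<nu> x = None \<longleftrightarrow> x = 0) \<and>
     (\<forall>x y. \<nu> (x * y) = plus_inf (\<nu> x) (\<nu> y)) \<and>
     (\<forall>x y. le_inf (\<nu> x) (\<nu> (x + y)) \<or> le_inf (\<nu> y) (\<nu> (x + y)))"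

definition val_ring :: "('k::field \<Rightarrow> 'g::linordered_ab_group_add option) \<Rightarrow> 'k set" where
  "val_ring \<nu> = {x. le_inf (Some 0) (\<nu> x)}"

definition vconv :: "('k::field \<Rightarrow> 'g::linordered_ab_group_add option) \<Rightarrow> ('k^'n) set \<Rightarrow> ('k^'n) set" where
  "vconv \<nu> Y = {x. \<exists>(n::nat) y \<alpha>. n \<ge> 1 \<and>
      (\<forall>i<n. y i \<in> Y) \<and> (\<forall>i<n. \<alpha> i \<in> val_ring \<nu>) \<and> (\<Sum>i<n. \<alpha> i) = 1 \<and>
      x = vec_lambda (\<lambda>c. \<Sum>i<n. \<alpha> i * vec_nth (y i) c)}"

end

theory Submission
  imports Defs
begin

text \<open>Translating by a point \<open>y\<^sub>0 \<in> Y\<close> identifies \<open>conv(Y)\<close> with \<open>y\<^sub>0 + M\<close>, where \<open>M\<close> is the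
  \<open>\<O>\<close>-submodule of \<open>K\<^sup>d\<close> generated by the differences \<open>y - y\<^sub>0\<close>. So it suffices to show that
  a finite set \<open>W\<close> generating an \<open>\<O>\<close>-module inside \<open>K\<^sup>d\<close> contains at most \<open>d\<close> elements
  that already generate it. This is Gaussian elimination over \<open>\<O>\<close>: in a fixed coordinate
  choose \<open>v \<in> W\<close> whose entry has minimal valuation; then every other entry of that coordinate
  is an \<open>\<O>\<close>-multiple of it, so subtracting these multiples of \<open>v\<close> clears the coordinate
  without leaving the module, and one recurses on the remaining \<open>d - 1\<close> coordinates.\<close>

lemma le_inf_trans: "le_inf a b \<Longrightarrow> le_inf b c \<Longrightarrow> le_inf a c"
  by (cases a; cases b; cases c) auto

lemma le_inf_linear: "le_inf a b \<or> le_inf b a"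
  by (cases a; cases b) auto

lemma le_inf_None_left: "le_inf None a \<Longrightarrow> a = None"
  by (cases a) auto

lemma ex_le_inf_minimal:
  assumes "finite A" and "A \<noteq> {}"
  shows "\<exists>a\<in>A. \<forall>b\<in>A. le_inf (f a) (f b)"
  using assms
proof (induction A rule: finite_ne_induct)
  case (singleton x)
  show ?case by (cases "f x") auto
next
  case (insert x A)
  then obtain a where "a \<in> A" and a_min: "\<forall>b\<in>A. le_inf (f a) (f b)"
    by blast
  show ?case
  proof (cases "le_inf (f x) (f a)")
    case True
    then show ?thesis
      using a_min le_inf_trans[of "f x" "f a"] le_inf_linear[of "f x" "f x"] by auto
  next
    case False
    then show ?thesis
      using \<open>a \<in> A\<close> a_min le_inf_linear[of "f x" "f a"] by auto
  qed
qed

lemma sum_lessThan_add: "(\<Sum>i<m + n. f i) = (\<Sum>i<m. f i) + (\<Sum>i<n. f (m + i))" for m n :: nat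
  by (induction n) (auto simp: add.assoc)

locale valuation =
  fixes \<nu> :: "'k::field \<Rightarrow> 'g::linordered_ab_group_add option"
  assumes is_valuation: "is_valuation \<nu>"
begin

lemma valuation_eq_None_iff: "\<nu> x = None \<longleftrightarrow> x = 0"
  using is_valuation unfolding is_valuation_def by simp

lemma valuation_mult: "\<nu> (x * y) = plus_inf (\<nu> x) (\<nu> y)"
  using is_valuation unfolding is_valuation_def by blast

lemma valuation_add: "le_inf (\<nu> x) (\<nu> (x + y)) \<or> le_inf (\<nu> y) (\<nu> (x + y))"
  using is_valuation unfolding is_valuation_def by blast

lemma valuation_one: "\<nu> 1 = Some 0"
proof -
  obtain g where g: "\<nu> 1 = Some g"
    using valuation_eq_None_iff[of 1] by (cases "\<nu> 1") auto
  have "\<nu> (1 * 1) = Some (g + g)"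
    using valuation_mult[of 1 1] g by simp
  then have "g + g = g"
    using g by simp
  then show ?thesis
    using g by simp
qed

lemma valuation_minus_one: "\<nu> (-1) = Some 0"
proof -
  obtain g where g: "\<nu> (-1) = Some g"
    using valuation_eq_None_iff[of "-1"] by (cases "\<nu> (-1)") auto
  have "\<nu> ((-1) * (-1)) = Some (g + g)"
    using valuation_mult[of "-1" "-1"] g by simp
  then have "g + g = 0"
    using valuation_one by simp
  then show ?thesis
    using g by simp
qed

lemma val_ring_zero: "0 \<in> val_ring \<nu>"
  using valuation_eq_None_iff[of 0] by (simp add: val_ring_def)

lemma val_ring_one: "1 \<in> val_ring \<nu>"
  using valuation_one by (simp add: val_ring_def)

lemma val_ring_mult: "a \<in> val_ring \<nu> \<Longrightarrow> b \<in> val_ring \<nu> \<Longrightarrow> a * b \<in> val_ring \<nu>"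
  unfolding val_ring_def using valuation_mult[of a b] by (cases "\<nu> a"; cases "\<nu> b") auto

lemma val_ring_add: "a \<in> val_ring \<nu> \<Longrightarrow> b \<in> val_ring \<nu> \<Longrightarrow> a + b \<in> val_ring \<nu>"
  unfolding val_ring_def using valuation_add[of a b] le_inf_trans by blast

lemma val_ring_uminus: "a \<in> val_ring \<nu> \<Longrightarrow> - a \<in> val_ring \<nu>"
  using val_ring_mult[of "-1" a] valuation_minus_one by (simp add: val_ring_def)

lemma val_ring_diff: "a \<in> val_ring \<nu> \<Longrightarrow> b \<in> val_ring \<nu> \<Longrightarrow> a - b \<in> val_ring \<nu>"
  using val_ring_add[of a "- b"] val_ring_uminus by simp

lemma val_ring_sum: "(\<And>i. i \<in> A \<Longrightarrow> f i \<in> val_ring \<nu>) \<Longrightarrow> sum f A \<in> val_ring \<nu>"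
  by (induction A rule: infinite_finite_induct) (auto intro: val_ring_add val_ring_zero)

text \<open>No hypothesis \<open>a \<noteq> 0\<close> is needed: for \<open>a = 0\<close> the quotient is the junk value \<open>0\<close>.\<close>
lemma val_ring_divide:
  assumes "le_inf (\<nu> a) (\<nu> b)"
  shows "b / a \<in> val_ring \<nu>"
proof (cases "a = 0 \<or> b = 0")
  case True
  then show ?thesis
    using val_ring_zero by auto
next
  case False
  then obtain p q r where p: "\<nu> a = Some p" and q: "\<nu> b = Some q" and r: "\<nu> (b / a) = Some r"
    using valuation_eq_None_iff by (metis divide_eq_0_iff not_Some_eq)
  have "\<nu> b = plus_inf (\<nu> a) (\<nu> (b / a))"
    using False valuation_mult[of a "b / a"] by simp
  then have "q = p + r"
    using p q r by simp
  then show ?thesis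
    using assms p q r by (simp add: val_ring_def)
qed

inductive_set val_span :: "('k^'n) set \<Rightarrow> ('k^'n) set" for X where
  zero: "0 \<in> val_span X"
| gen: "x \<in> X \<Longrightarrow> x \<in> val_span X"
| add: "x \<in> val_span X \<Longrightarrow> y \<in> val_span X \<Longrightarrow> x + y \<in> val_span X"
| smult: "a \<in> val_ring \<nu> \<Longrightarrow> x \<in> val_span X \<Longrightarrow> a *s x \<in> val_span X"

lemma val_span_diff:
  assumes "x \<in> val_span X" and "y \<in> val_span X"
  shows "x - y \<in> val_span X"
proof -
  have "x + (-1) *s y \<in> val_span X"
    using assms val_ring_uminus[OF val_ring_one] by (auto intro: val_span.add val_span.smult)
  moreover have "x + (-1) *s y = x - y"
    by (simp add: vec_eq_iff)
  ultimately show ?thesis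
    by simp
qed

lemma val_span_sum: "(\<And>i. i \<in> A \<Longrightarrow> f i \<in> val_span X) \<Longrightarrow> sum f A \<in> val_span X"
  by (induction A rule: infinite_finite_induct) (auto intro: val_span.add val_span.zero)

lemma val_span_subset: "X \<subseteq> val_span Y \<Longrightarrow> val_span X \<subseteq> val_span Y"
proof
  fix z assume "z \<in> val_span X" and "X \<subseteq> val_span Y"
  then show "z \<in> val_span Y"
    by (induction rule: val_span.induct) (auto intro: val_span.intros)
qed

lemma val_span_mono: "X \<subseteq> Y \<Longrightarrow> val_span X \<subseteq> val_span Y"
  by (rule val_span_subset) (auto intro: val_span.gen)

lemma val_span_eq_of_generating_subset:
  assumes "X \<subseteq> Y" and "Y \<subseteq> val_span X"
  shows "val_span Y = val_span X"
  using assms val_span_mono val_span_subset by blast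

lemma val_span_insert_zero: "val_span (insert 0 X) = val_span X"
  by (intro val_span_eq_of_generating_subset) (auto intro: val_span.zero val_span.gen)

lemma val_span_finite_combination:
  assumes "z \<in> val_span X"
  shows "\<exists>(n::nat) y \<beta>. (\<forall>i<n. y i \<in> X) \<and> (\<forall>i<n. \<beta> i \<in> val_ring \<nu>) \<and> z = (\<Sum>i<n. \<beta> i *s y i)"
  using assms
proof (induction rule: val_span.induct)
  case zero
  show ?case
    by (intro exI[of _ "0::nat"]) simp
next
  case (gen x)
  then show ?case
    by (intro exI[of _ 1] exI[of _ "\<lambda>_. x"] exI[of _ "\<lambda>_. 1"]) (simp add: val_ring_one)
next
  case (add x x')
  then obtain m y \<beta> m' y' \<beta>' where
    x: "\<forall>i<(m::nat). y i \<in> X" "\<forall>i<m. \<beta> i \<in> val_ring \<nu>" "x = (\<Sum>i<m. \<beta> i *s y i)" and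
    x': "\<forall>i<(m'::nat). y' i \<in> X" "\<forall>i<m'. \<beta>' i \<in> val_ring \<nu>" "x' = (\<Sum>i<m'. \<beta>' i *s y' i)"
    by blast
  define yy where "yy i = (if i < m then y i else y' (i - m))" for i
  define \<beta>\<beta> where "\<beta>\<beta> i = (if i < m then \<beta> i else \<beta>' (i - m))" for i
  have "(\<Sum>i<m + m'. \<beta>\<beta> i *s yy i) = (\<Sum>i<m. \<beta>\<beta> i *s yy i) + (\<Sum>i<m'. \<beta>\<beta> (m + i) *s yy (m + i))"
    by (rule sum_lessThan_add)
  also have "\<dots> = x + x'"
    unfolding x(3) x'(3) by (intro arg_cong2[where f = "(+)"] sum.cong) (auto simp: yy_def \<beta>\<beta>_def)
  finally show ?case
    using x x' by (intro exI[of _ "m + m'"] exI[of _ yy] exI[of _ \<beta>\<beta>]) (auto simp: yy_def \<beta>\<beta>_def)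
next
  case (smult a x)
  then obtain m y \<beta> where
    x: "\<forall>i<(m::nat). y i \<in> X" "\<forall>i<m. \<beta> i \<in> val_ring \<nu>" "x = (\<Sum>i<m. \<beta> i *s y i)"
    by blast
  have "a *s x = (\<Sum>i<m. (a * \<beta> i) *s y i)"
    unfolding x(3) by (simp add: vec_eq_iff sum_distrib_left mult.assoc)
  then show ?case
    using x smult(1) by (intro exI[of _ m] exI[of _ y] exI[of _ "\<lambda>i. a * \<beta> i"]) (simp add: val_ring_mult)
qed

lemma clear_coordinate_by_pivot:
  fixes W :: "('k^'n) set"
  assumes "finite W" and "W \<noteq> {}"
  obtains v a where "v \<in> W" and "\<forall>w\<in>W. a w \<in> val_ring \<nu>" and "\<forall>w\<in>W. (w - a w *s v) $ c = 0"
proof -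
  obtain v where "v \<in> W" and v_min: "\<forall>w\<in>W. le_inf (\<nu> (v $ c)) (\<nu> (w $ c))"
    using ex_le_inf_minimal[OF assms, where f = "\<lambda>w. \<nu> (w $ c)"] by blast
  have "w $ c = 0" if "w \<in> W" and "v $ c = 0" for w
    using v_min that valuation_eq_None_iff le_inf_None_left by metis
  then have "\<forall>w\<in>W. (w - (w $ c / v $ c) *s v) $ c = 0"
    by (cases "v $ c = 0") auto
  moreover have "\<forall>w\<in>W. w $ c / v $ c \<in> val_ring \<nu>"
    using v_min by (simp add: val_ring_divide)
  ultimately show thesis
    using that[of v "\<lambda>w. w $ c / v $ c"] \<open>v \<in> W\<close> by blast
qed

lemma small_generating_subset:
  fixes W :: "('k^'n) set" and C :: "'n set"
  assumes "finite W" and "\<forall>w\<in>W. \<forall>c. c \<notin> C \<longrightarrow> w $ c = 0"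
  shows "\<exists>W0\<subseteq>W. card W0 \<le> card C \<and> W \<subseteq> val_span W0"
  using finite[of C] assms
proof (induction C arbitrary: W rule: finite_induct)
  case empty
  then have "W \<subseteq> {0}"
    by (auto simp: vec_eq_iff)
  then show ?case
    by (intro exI[of _ "{}"]) (auto intro: val_span.zero)
next
  case (insert c C)
  show ?case
  proof (cases "W = {}")
    case True
    then show ?thesis
      by simp
  next
    case False
    obtain v a where "v \<in> W" and a: "\<forall>w\<in>W. a w \<in> val_ring \<nu>"
      and cleared: "\<forall>w\<in>W. (w - a w *s v) $ c = 0"
      using clear_coordinate_by_pivot[OF \<open>finite W\<close> False] by metis
    define g where "g w = w - a w *s v" for w
    have g_supported: "\<forall>u\<in>g ` W. \<forall>c'. c' \<notin> C \<longrightarrow> u $ c' = 0"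
    proof (intro ballI allI impI)
      fix u c' assume "u \<in> g ` W" and "c' \<notin> C"
      then show "u $ c' = 0"
        using cleared insert.prems(2) \<open>v \<in> W\<close> by (cases "c' = c") (auto simp: g_def)
    qed
    obtain W0' where "W0' \<subseteq> g ` W" and card_W0': "card W0' \<le> card C"
      and span_W0': "g ` W \<subseteq> val_span W0'"
      using insert.IH[OF finite_imageI[OF \<open>finite W\<close>] g_supported] by blast
    then obtain U where "U \<subseteq> W" and "inj_on g U" and W0': "W0' = g ` U"
      using subset_image_inj by metis
    define W0 where "W0 = insert v U"
    have multiple_of_v: "a w *s v \<in> val_span W0" if "w \<in> W" for w
      using a that by (auto simp: W0_def intro: val_span.smult val_span.gen)
    have "W0' \<subseteq> val_span W0"
      unfolding W0' g_def using \<open>U \<subseteq> W\<close> multiple_of_v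
      by (auto simp: W0_def intro: val_span_diff val_span.gen)
    then have "g ` W \<subseteq> val_span W0"
      using val_span_subset span_W0' by blast
    have "W \<subseteq> val_span W0"
    proof
      fix w assume "w \<in> W"
      then have "g w + a w *s v \<in> val_span W0"
        using \<open>g ` W \<subseteq> val_span W0\<close> multiple_of_v by (blast intro: val_span.add)
      then show "w \<in> val_span W0"
        by (simp add: g_def)
    qed
    moreover have "card W0 \<le> card (insert c C)"
      using card_W0' card_image[OF \<open>inj_on g U\<close>] insert.hyps finite_subset[OF \<open>U \<subseteq> W\<close>]
      unfolding W0_def W0' by (simp add: card_insert_if \<open>finite W\<close>)
    moreover have "W0 \<subseteq> W"
      using \<open>U \<subseteq> W\<close> \<open>v \<in> W\<close> by (simp add: W0_def)
    ultimately show ?thesis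
      by blast
  qed
qed

lemma vconv_eq_translated_span:
  assumes "y0 \<in> Y"
  shows "vconv \<nu> Y = (+) y0 ` val_span ((\<lambda>y. y - y0) ` Y)"
    (is "_ = (+) y0 ` val_span ?D")
proof (intro equalityI subsetI)
  fix x assume "x \<in> vconv \<nu> Y"
  then obtain n :: nat and y \<alpha> where y: "\<forall>i<n. y i \<in> Y" and \<alpha>: "\<forall>i<n. \<alpha> i \<in> val_ring \<nu>"
    and sum_\<alpha>: "(\<Sum>i<n. \<alpha> i) = 1" and x: "x = (\<chi> c. \<Sum>i<n. \<alpha> i * y i $ c)"
    unfolding vconv_def by blast
  have "x - y0 = (\<Sum>i<n. \<alpha> i *s (y i - y0))"
    using sum_\<alpha>
    by (simp add: x vec_eq_iff right_diff_distrib sum_subtractf flip: sum_distrib_right)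
  moreover have "(\<Sum>i<n. \<alpha> i *s (y i - y0)) \<in> val_span ?D"
    using y \<alpha> by (intro val_span_sum val_span.smult val_span.gen) auto
  ultimately have "x - y0 \<in> val_span ?D"
    by simp
  then show "x \<in> (+) y0 ` val_span ?D"
    by (rule image_eqI[rotated]) simp
next
  fix x assume "x \<in> (+) y0 ` val_span ?D"
  then obtain u where "u \<in> val_span ?D" and x: "x = y0 + u"
    by blast
  then obtain m d \<beta> where d: "\<forall>i<(m::nat). d i \<in> ?D" and \<beta>: "\<forall>i<m. \<beta> i \<in> val_ring \<nu>"
    and u: "u = (\<Sum>i<m. \<beta> i *s d i)"
    using val_span_finite_combination by blast
  text \<open>\<open>x = y\<^sub>0 + \<Sum>\<beta>\<^sub>i d\<^sub>i\<close> is the \<open>\<O>\<close>-convex combination of the points \<open>d\<^sub>i + y\<^sub>0 \<in> Y\<close>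
    and \<open>y\<^sub>0\<close> with weights \<open>\<beta>\<^sub>i\<close> and \<open>1 - \<Sum>\<beta>\<^sub>i\<close>.\<close>
  define yy where "yy i = (if i < m then d i + y0 else y0)" for i
  define \<alpha> where "\<alpha> i = (if i < m then \<beta> i else 1 - (\<Sum>j<m. \<beta> j))" for i
  have "x $ c = (\<Sum>i<Suc m. \<alpha> i * yy i $ c)" for c
    by (simp add: x u \<alpha>_def yy_def algebra_simps sum.distrib sum_distrib_left)
  moreover have "\<forall>i<Suc m. \<alpha> i \<in> val_ring \<nu>"
    using \<beta> by (auto simp: \<alpha>_def intro!: val_ring_diff val_ring_one val_ring_sum)
  moreover have "\<forall>i<Suc m. yy i \<in> Y"
    using d assms by (auto simp: yy_def)
  moreover have "(\<Sum>i<Suc m. \<alpha> i) = 1"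
    by (simp add: \<alpha>_def)
  ultimately show "x \<in> vconv \<nu> Y"
    unfolding vconv_def
    by (intro CollectI exI[of _ "Suc m"] exI[of _ yy] exI[of _ \<alpha>]) (simp add: vec_eq_iff)
qed

lemma vconv_eq_of_generating_differences:
  assumes "y0 \<in> Y" and "D0 \<subseteq> (\<lambda>y. y - y0) ` Y" and "(\<lambda>y. y - y0) ` Y \<subseteq> val_span D0"
  shows "vconv \<nu> ((+) y0 ` insert 0 D0) = vconv \<nu> Y"
proof -
  let ?Y0 = "(+) y0 ` insert 0 D0"
  have "(\<lambda>y. y - y0) ` ?Y0 = insert 0 D0"
    by (simp add: image_image)
  have "vconv \<nu> ?Y0 = (+) y0 ` val_span ((\<lambda>y. y - y0) ` ?Y0)"
    by (rule vconv_eq_translated_span) simp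
  also have "\<dots> = (+) y0 ` val_span D0"
    unfolding \<open>(\<lambda>y. y - y0) ` ?Y0 = insert 0 D0\<close> val_span_insert_zero ..
  also have "\<dots> = vconv \<nu> Y"
    unfolding vconv_eq_translated_span[OF assms(1)] val_span_eq_of_generating_subset[OF assms(2,3)] ..
  finally show ?thesis .
qed

end

theorem corollary2p8:
  fixes \<nu> :: "'k::field \<Rightarrow> 'g::linordered_ab_group_add option"
    and Y :: "('k^'n) set"
  assumes "is_valuation \<nu>"
    and "finite Y" and "Y \<noteq> {}"
  shows "\<exists>Y0 \<subseteq> Y. card Y0 \<le> CARD('n) + 1 \<and> vconv \<nu> Y0 = vconv \<nu> Y"
proof -
  interpret valuation \<nu>
    by (rule valuation.intro) (rule assms(1))
  obtain y0 where "y0 \<in> Y"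
    using assms(3) by blast
  define D where "D = (\<lambda>y. y - y0) ` Y"
  obtain D0 where "D0 \<subseteq> D" and card_D0: "card D0 \<le> CARD('n)" and "D \<subseteq> val_span D0"
    using small_generating_subset[of D UNIV] assms(2) by (auto simp: D_def)
  define Y0 where "Y0 = (+) y0 ` insert 0 D0"
  have "Y0 \<subseteq> Y"
    using \<open>D0 \<subseteq> D\<close> \<open>y0 \<in> Y\<close> by (auto simp: Y0_def D_def)
  moreover have "card Y0 \<le> CARD('n) + 1"
    using card_D0 finite_subset[OF \<open>D0 \<subseteq> D\<close>] assms(2)
    by (simp add: Y0_def D_def card_image card_insert_if)
  moreover have "vconv \<nu> Y0 = vconv \<nu> Y"
    using vconv_eq_of_generating_differences \<open>y0 \<in> Y\<close> \<open>D0 \<subseteq> D\<close> \<open>D \<subseteq> val_span D0\<close>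
    unfolding Y0_def D_def by blast
  ultimately show ?thesis
    by blast
qed

end
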